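(* Let $l,m\in\mathbb{N}$. If $q(x)=x^6-(l+m+3)x^4+(lm+l+m+3)x^2-1$ is irreducible over $\mathbb{Q}$, then the set of all positive eigenvalues (respectively, all negative eigenvalues) of the adjacency matrix of the double subdivided star $T_{l,m}$ is linearly independent over $\mathbb{Q}$.
   Context: A subdivided star $SK_{1,l}$ is obtained by identifying exactly one pendant (end) vertex from each of $l$ copies of the path $P_3$; the identified vertex is the coalescence vertex. The double subdivided star $T_{l,m}$ is obtained from $SK_{1,l}$ and $SK_{1,m}$ by adding one edge joining their two coalescence vertices. Its characteristic polynomial is $(x^2-1)^{l+m-2}q(x)$. *)

theory Defs
  imports "Jordan_Normal_Form.Char_Poly" "HOL-Computational_Algebra.Polynomial"
begin

text \<open>Vertices of the double subdivided star T_{l,m} are 0..<2+2l+2m: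
  0 is the coalescence vertex of SK_{1,l}, 1 that of SK_{1,m};
  for i < l the arm of SK_{1,l} is the path 0 -- (2+2i) -- (3+2i);
  for j < m the arm of SK_{1,m} is the path 1 -- (2+2l+2j) -- (3+2l+2j);
  the extra edge joins 0 and 1.\<close>

definition dss_num_vertices :: "nat \<Rightarrow> nat \<Rightarrow> nat" where
  "dss_num_vertices l m = 2 + 2 * l + 2 * m"

definition dss_arc :: "nat \<Rightarrow> nat \<Rightarrow> nat \<Rightarrow> nat \<Rightarrow> bool" where
  "dss_arc l m u v \<longleftrightarrow>
     (u = 0 \<and> v = 1)
   \<or> (\<exists>i<l. (u = 0 \<and> v = 2 + 2 * i) \<or> (u = 2 + 2 * i \<and> v = 3 + 2 * i))
   \<or> (\<exists>j<m. (u = 1 \<and> v = 2 + 2 * l + 2 * j) \<or> (u = 2 + 2 * l + 2 * j \<and> v = 3 + 2 * l + 2 * j))"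

definition dss_edge :: "nat \<Rightarrow> nat \<Rightarrow> nat \<Rightarrow> nat \<Rightarrow> bool" where
  "dss_edge l m u v \<longleftrightarrow> dss_arc l m u v \<or> dss_arc l m v u"

definition dss_adj :: "nat \<Rightarrow> nat \<Rightarrow> real mat" where
  "dss_adj l m = mat (dss_num_vertices l m) (dss_num_vertices l m)
      (\<lambda>(u, v). if dss_edge l m u v then 1 else 0)"

definition Q_lin_indep :: "real set \<Rightarrow> bool" where
  "Q_lin_indep S \<longleftrightarrow> \<not> module.dependent (\<lambda>(q::rat) (x::real). of_rat q * x) S"

end

theory Submission
  imports Defs "HOL-Computational_Algebra.Field_as_Ring"
begin

(*
  Along each pendant path the eigenvector equations express the path entries through the two
  centre entries; for an eigenvalue k with k^2 ~= 1 the equations at the centres then force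
  q(k) = 0. Writing q(x) = p(x^2), the cubic p has three positive roots x1^2, x2^2, x3^2 with
  product 1 and sum l + m + 3, so the positive eigenvalues lie in {1, x1, x2, x3} and the
  negative ones in {-1, -x1, -x2, -x3}.
  Squaring a rational relation a + b1 x1 + b2 x2 + b3 x3 = 0 twice eliminates x2 and x3 and
  leaves B(x1)^2 = h(x1) with B a rational cubic and h an even rational polynomial. As q is
  irreducible and even, the identity also holds at -x1, so B is even or odd, which forces
  a b1 = b2 b3 = 0. By symmetry all such products vanish, so the relation is trivial.
*)

interpretation of_rat_poly_hom: map_poly_idom_hom "of_rat :: rat \<Rightarrow> real" ..

lemma irreducible_dvd_of_common_root:
  fixes p f :: "rat poly" and x :: real
  assumes irr: "irreducible p"
    and p_root: "poly (map_poly of_rat p) x = 0" and f_root: "poly (map_poly of_rat f) x = 0"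
  shows "p dvd f"
proof (rule ccontr)
  assume "\<not> p dvd f"
  with irr have "gcd p f = 1"
    by (intro coprime_imp_gcd_eq_1 prime_elem_imp_coprime irreducible_imp_prime_elem)
  then have "fst (bezout_coefficients p f) * p + snd (bezout_coefficients p f) * f = 1"
    by (simp add: bezout_coefficients_fst_snd)
  then have "poly (map_poly (of_rat :: rat \<Rightarrow> real)
      (fst (bezout_coefficients p f) * p + snd (bezout_coefficients p f) * f)) x = 1"
    by simp
  with p_root f_root show False by (simp add: hom_distribs)
qed

lemma irreducible_common_root_transfer:
  fixes p f :: "rat poly" and x y :: real
  assumes "irreducible p" and "poly (map_poly of_rat p) x = 0" and "poly (map_poly of_rat p) y = 0"
    and "poly (map_poly of_rat f) x = 0"
  shows "poly (map_poly of_rat f) y = 0"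
proof -
  obtain g where "f = p * g" using irreducible_dvd_of_common_root[OF assms(1,2,4)] by (elim dvdE)
  with assms(3) show ?thesis by (simp add: hom_distribs)
qed

lemma irreducible_common_root_degree_eq_0:
  fixes p f :: "rat poly" and x :: real
  assumes "irreducible p" and "poly (map_poly of_rat p) x = 0" and "poly (map_poly of_rat f) x = 0"
    and "degree f < degree p"
  shows "f = 0"
  using irreducible_dvd_of_common_root[OF assms(1-3)] assms(4) dvd_imp_degree_le by force

lemma irreducible_poly_no_rational_root:
  fixes p :: "rat poly"
  assumes "irreducible p" and "1 < degree p"
  shows "poly p c \<noteq> 0"
proof
  assume "poly p c = 0"
  then have "poly (map_poly of_rat p) (of_rat c :: real) = 0" by simp
  moreover have "poly (map_poly of_rat [:-c, 1:]) (of_rat c :: real) = 0" by (simp add: hom_distribs)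
  ultimately have "p dvd [:-c, 1:]" by (rule irreducible_dvd_of_common_root[OF assms(1)])
  then show False using dvd_imp_degree_le[of p "[:-c, 1:]"] assms(2) by simp
qed

(*
  Squaring b2 x2 + b3 x3 = -(a + b1 x1) and using x2 x3 = 1/x1 and
  x2^2 + x3^2 = s - x1^2 leaves only the term x1 (b2^2 - b3^2)(x2^2 - x3^2) involving
  x2, x3; a second squaring eliminates them.
*)
lemma linear_relation_elimination:
  fixes x1 x2 x3 a b1 b2 b3 s :: "'a::comm_ring_1"
  assumes prod: "x1 * x2 * x3 = 1" and sq_sum: "x1^2 + x2^2 + x3^2 = s"
    and rel: "a + b1 * x1 + b2 * x2 + b3 * x3 = 0"
  shows "(- 4 * b2 * b3 + (2 * a^2 - (b2^2 + b3^2) * s) * x1 + 4 * a * b1 * x1^2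
      + (2 * b1^2 + b2^2 + b3^2) * x1^3)^2 = (b2^2 - b3^2)^2 * (x1^2 * (s - x1^2)^2 - 4)"
proof -
  have a: "a = - (b1 * x1 + b2 * x2 + b3 * x3)"
    using rel by (simp add: eq_neg_iff_add_eq_0 algebra_simps)
  have "- 4 * b2 * b3 = - 4 * b2 * b3 * (x1 * x2 * x3)" using prod by simp
  then have "- 4 * b2 * b3 + (2 * a^2 - (b2^2 + b3^2) * s) * x1 + 4 * a * b1 * x1^2
      + (2 * b1^2 + b2^2 + b3^2) * x1^3 = (b2^2 - b3^2) * (x1 * (x2^2 - x3^2))"
    unfolding a sq_sum[symmetric] by (simp add: algebra_simps power2_eq_square power3_eq_cube)
  moreover have "4 = 4 * (x1 * x2 * x3)^2" using prod by simp
  then have "(x1 * (x2^2 - x3^2))^2 = x1^2 * (s - x1^2)^2 - 4"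
    unfolding sq_sum[symmetric] by (simp add: algebra_simps power2_eq_square)
  ultimately show ?thesis by (simp add: power_mult_distrib)
qed

(*
  The identity transfers from x to the conjugate root -x, so B(x)^2 = B(-x)^2 and either the
  odd or the even part of B vanishes at x; having small degree, it then vanishes identically.
*)
lemma cubic_square_even_imp_even_or_odd:
  fixes p h :: "rat poly" and x :: real and c0 c1 c2 c3 :: rat
  assumes irr: "irreducible p" and deg: "2 < degree p"
    and root: "poly (map_poly of_rat p) x = 0" and root_neg: "poly (map_poly of_rat p) (- x) = 0"
    and "x \<noteq> 0"
    and h_even: "poly (map_poly of_rat h) (- x) = poly (map_poly of_rat h) x"
    and square: "(poly (map_poly of_rat [:c0, c1, c2, c3:]) x)^2 = poly (map_poly of_rat h) x"
  shows "(c1 = 0 \<and> c3 = 0) \<or> (c0 = 0 \<and> c2 = 0)"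
proof -
  let ?ev = "\<lambda>f y. poly (map_poly (of_rat :: rat \<Rightarrow> real) f) y"
  let ?c = "[:c0, c1, c2, c3:]"
  have "?ev (?c^2 - h) x = 0" using square by (simp add: hom_distribs)
  then have "?ev (?c^2 - h) (- x) = 0"
    by (rule irreducible_common_root_transfer[OF irr root root_neg])
  then have "(?ev ?c x - ?ev ?c (- x)) * (?ev ?c x + ?ev ?c (- x)) = 0"
    using square h_even by (simp add: hom_distribs algebra_simps power2_eq_square)
  moreover have "?ev ?c x - ?ev ?c (- x) = 2 * x * ?ev [:c1, 0, c3:] x"
    and "?ev ?c x + ?ev ?c (- x) = 2 * ?ev [:c0, 0, c2:] x"
    by (simp_all add: hom_distribs algebra_simps power2_eq_square power3_eq_cube)
  ultimately have "?ev [:c1, 0, c3:] x = 0 \<or> ?ev [:c0, 0, c2:] x = 0"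
    using \<open>x \<noteq> 0\<close> by simp
  moreover have "degree [:c1, 0, c3:] < degree p" and "degree [:c0, 0, c2:] < degree p"
    using deg by simp_all
  ultimately have "[:c1, 0, c3:] = 0 \<or> [:c0, 0, c2:] = 0"
    using irreducible_common_root_degree_eq_0[OF irr root] by blast
  then show ?thesis by auto
qed

lemma linear_relation_products_eq_0:
  fixes p :: "rat poly" and x1 x2 x3 :: real and a b1 b2 b3 s :: rat
  assumes irr: "irreducible p" and deg: "2 < degree p"
    and root: "poly (map_poly of_rat p) x1 = 0" and root_neg: "poly (map_poly of_rat p) (- x1) = 0"
    and prod: "x1 * x2 * x3 = 1" and sq_sum: "x1^2 + x2^2 + x3^2 = of_rat s"
    and rel: "of_rat a + of_rat b1 * x1 + of_rat b2 * x2 + of_rat b3 * x3 = 0"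
  shows "a * b1 = 0 \<and> b2 * b3 = 0"
proof -
  define h :: "rat poly"
    where "h = Polynomial.smult ((b2^2 - b3^2)^2) [:-4, 0, s^2, 0, -2 * s, 0, 1:]"
  have h_eval: "poly (map_poly of_rat h) y
      = of_rat ((b2^2 - b3^2)^2) * (y^2 * (of_rat s - y^2)^2 - 4)" for y :: real
    by (simp add: h_def hom_distribs algebra_simps power2_eq_square power3_eq_cube numeral_eq_Suc
        of_rat_mult of_rat_power)
  have "(2 * b1^2 + b2^2 + b3^2 = 0) \<or> (- 4 * b2 * b3 = 0 \<and> 4 * a * b1 = 0)"
  proof (rule cubic_square_even_imp_even_or_odd[OF irr deg root root_neg, THEN disj_forward])
    show "x1 \<noteq> 0" using prod by auto
    show "poly (map_poly of_rat h) (- x1) = poly (map_poly of_rat h) x1" by (simp add: h_eval)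
    show "(poly (map_poly of_rat [:- 4 * b2 * b3, 2 * a^2 - (b2^2 + b3^2) * s, 4 * a * b1,
        2 * b1^2 + b2^2 + b3^2:]) x1)^2 = poly (map_poly of_rat h) x1"
      using linear_relation_elimination[OF prod sq_sum rel]
      by (simp add: h_eval hom_distribs algebra_simps power2_eq_square power3_eq_cube
          of_rat_add of_rat_mult of_rat_diff of_rat_minus of_rat_power)
  qed auto
  then show ?thesis by (auto simp: add_nonneg_eq_0_iff)
qed

interpretation rat_scaling: Modules.module "\<lambda>(q::rat) (x::real). of_rat q * x"
  by unfold_locales (simp_all add: algebra_simps of_rat_add of_rat_mult)

lemma Q_lin_indep_subset: "Q_lin_indep T \<Longrightarrow> S \<subseteq> T \<Longrightarrow> Q_lin_indep S"
  unfolding Q_lin_indep_def using rat_scaling.independent_mono by blast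

lemma Q_lin_indep_uminus_image:
  assumes "Q_lin_indep S"
  shows "Q_lin_indep (uminus ` S)"
proof -
  interpret uminus_hom:
    module_hom "\<lambda>(q::rat) (x::real). of_rat q * x" "\<lambda>(q::rat) (x::real). of_rat q * x" uminus
    by (rule rat_scaling.module_hom_uminus)
  show ?thesis
    using assms unfolding Q_lin_indep_def
    by (intro uminus_hom.independent_injective_image) (simp_all add: inj_on_def)
qed

lemma Q_lin_indep_four:
  fixes w0 w1 w2 w3 :: real
  assumes trivial: "\<And>a b c d. of_rat a * w0 + of_rat b * w1 + of_rat c * w2 + of_rat d * w3 = 0
      \<Longrightarrow> a = 0 \<and> b = 0 \<and> c = 0 \<and> d = 0"
  shows "Q_lin_indep {w0, w1, w2, w3}"
proof -
  have "w0 \<noteq> w1" using trivial[of 1 "-1" 0 0] by (auto simp: of_rat_minus)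
  moreover have "w0 \<noteq> w2" using trivial[of 1 0 "-1" 0] by (auto simp: of_rat_minus)
  moreover have "w0 \<noteq> w3" using trivial[of 1 0 0 "-1"] by (auto simp: of_rat_minus)
  moreover have "w1 \<noteq> w2" using trivial[of 0 1 "-1" 0] by (auto simp: of_rat_minus)
  moreover have "w1 \<noteq> w3" using trivial[of 0 1 0 "-1"] by (auto simp: of_rat_minus)
  moreover have "w2 \<noteq> w3" using trivial[of 0 0 1 "-1"] by (auto simp: of_rat_minus)
  ultimately show ?thesis
    unfolding Q_lin_indep_def using trivial
    by (subst rat_scaling.dependent_finite) (auto simp: add.assoc)
qed

lemma Q_lin_indep_one_and_roots:
  fixes p :: "rat poly" and x1 x2 x3 :: real and s :: rat
  assumes irr: "irreducible p" and deg: "2 < degree p"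
    and roots: "\<And>x. x \<in> {x1, x2, x3} \<Longrightarrow>
      poly (map_poly of_rat p) x = 0 \<and> poly (map_poly of_rat p) (- x) = 0"
    and prod: "x1 * x2 * x3 = 1" and sq_sum: "x1^2 + x2^2 + x3^2 = of_rat s"
  shows "Q_lin_indep {1, x1, x2, x3}"
proof (rule Q_lin_indep_four)
  fix a b1 b2 b3 :: rat
  assume "of_rat a * 1 + of_rat b1 * x1 + of_rat b2 * x2 + of_rat b3 * x3 = 0"
  then have rel: "of_rat a + of_rat b1 * x1 + of_rat b2 * x2 + of_rat b3 * x3 = 0" by simp
  have "a * b1 = 0 \<and> b2 * b3 = 0"
    using linear_relation_products_eq_0[OF irr deg _ _ prod sq_sum rel] roots by simp
  moreover have "a * b2 = 0 \<and> b1 * b3 = 0"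
    using linear_relation_products_eq_0[OF irr deg, of x2 x1 x3 s a b2 b1 b3] roots prod sq_sum rel
    by (simp add: algebra_simps)
  moreover have "a * b3 = 0 \<and> b1 * b2 = 0"
    using linear_relation_products_eq_0[OF irr deg, of x3 x1 x2 s a b3 b1 b2] roots prod sq_sum rel
    by (simp add: algebra_simps)
  moreover have "x1 \<noteq> 0" "x2 \<noteq> 0" "x3 \<noteq> 0" using prod by auto
  ultimately show "a = 0 \<and> b1 = 0 \<and> b2 = 0 \<and> b3 = 0" using rel by auto
qed

definition dss_sextic :: "nat \<Rightarrow> nat \<Rightarrow> real \<Rightarrow> real" where
  "dss_sextic l m x = x^6 - real (l + m + 3) * x^4 + real (l * m + l + m + 3) * x^2 - 1"

lemma cubic_vieta:
  fixes y1 y2 y3 s t :: "'a::field"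
  assumes roots: "\<And>y. y \<in> {y1, y2, y3} \<Longrightarrow> y^3 - s * y^2 + t * y - 1 = 0"
    and distinct: "y1 \<noteq> y2" "y1 \<noteq> y3" "y2 \<noteq> y3"
  shows "y1 + y2 + y3 = s" and "y1 * y2 * y3 = 1"
    and "\<And>z. z^3 - s * z^2 + t * z - 1 = (z - y1) * (z - y2) * (z - y3)"
proof -
  have r1: "y1^3 - s * y1^2 + t * y1 - 1 = 0" and r2: "y2^3 - s * y2^2 + t * y2 - 1 = 0"
    and r3: "y3^3 - s * y3^2 + t * y3 - 1 = 0"
    using roots by simp_all
  have "(y1 - y2) * (y1^2 + y1 * y2 + y2^2 - s * (y1 + y2) + t) = 0"
    using r1 r2 by (simp add: algebra_simps power2_eq_square power3_eq_cube)
  then have q12: "y1^2 + y1 * y2 + y2^2 - s * (y1 + y2) + t = 0" using distinct by simp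
  have "(y1 - y3) * (y1^2 + y1 * y3 + y3^2 - s * (y1 + y3) + t) = 0"
    using r1 r3 by (simp add: algebra_simps power2_eq_square power3_eq_cube)
  then have q13: "y1^2 + y1 * y3 + y3^2 - s * (y1 + y3) + t = 0" using distinct by simp
  have "(y2 - y3) * (y1 + y2 + y3 - s)
      = (y1^2 + y1 * y2 + y2^2 - s * (y1 + y2) + t) - (y1^2 + y1 * y3 + y3^2 - s * (y1 + y3) + t)"
    by (simp add: algebra_simps power2_eq_square)
  then have "(y2 - y3) * (y1 + y2 + y3 - s) = 0" using q12 q13 by simp
  then show sum: "y1 + y2 + y3 = s" using distinct by simp
  have pairs: "y1 * y2 + y1 * y3 + y2 * y3 = t"
    using q12 sum[symmetric] by (simp add: algebra_simps power2_eq_square)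
  have "y1^3 - s * y1^2 + t * y1 - y1 * y2 * y3 = 0"
    unfolding sum[symmetric] pairs[symmetric] by (simp add: algebra_simps power2_eq_square power3_eq_cube)
  then show prod: "y1 * y2 * y3 = 1" using r1 by simp
  show "z^3 - s * z^2 + t * z - 1 = (z - y1) * (z - y2) * (z - y3)" for z
    unfolding sum[symmetric] pairs[symmetric] prod[symmetric]
    by (simp add: algebra_simps power2_eq_square power3_eq_cube)
qed

lemma dss_cubic_roots:
  fixes L M :: real
  assumes L: "1 \<le> L" and M: "1 \<le> M"
  obtains y1 y2 y3 where "0 < y1" "y1 < 1" "1 < y2" "y2 < 1 + L" "1 + L < y3"
    and "\<And>y. y \<in> {y1, y2, y3} \<Longrightarrow> y^3 - (L + M + 3) * y^2 + (L * M + L + M + 3) * y - 1 = 0"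
proof -
  define P where "P y = y^3 - (L + M + 3) * y^2 + (L * M + L + M + 3) * y - 1" for y
  have cont: "continuous_on A P" for A unfolding P_def by (intro continuous_intros)
  have P0: "P 0 < 0" unfolding P_def by simp
  have P1: "0 < P 1"
    using L M mult_mono[of 1 L 1 M] unfolding P_def by (simp add: algebra_simps)
  have P2: "P (1 + L) < 0"
    using L unfolding P_def by (simp add: algebra_simps power2_eq_square power3_eq_cube)
  have "0 \<le> L * M" using L M by simp
  with L M have "1 < (L * M + L + M + 3) * (L + M + 3)" by (intro less_1_mult) linarith+
  moreover have "P (L + M + 3) = (L * M + L + M + 3) * (L + M + 3) - 1"
    unfolding P_def by (simp add: algebra_simps power2_eq_square power3_eq_cube)
  ultimately have P3: "0 < P (L + M + 3)" by simp
  obtain y1 where y1: "0 \<le> y1" "y1 \<le> 1" "P y1 = 0"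
    using IVT'[of P 0 0 1] P0 P1 cont by auto
  obtain y2 where y2: "1 \<le> y2" "y2 \<le> 1 + L" "P y2 = 0"
    using IVT2'[of P "1 + L" 0 1] P1 P2 cont L by auto
  obtain y3 where y3: "1 + L \<le> y3" "y3 \<le> L + M + 3" "P y3 = 0"
    using IVT'[of P "1 + L" 0 "L + M + 3"] P2 P3 cont L M by auto
  show ?thesis
  proof (rule that[of y1 y2 y3])
    show "0 < y1" "y1 < 1" "1 < y2" "y2 < 1 + L" "1 + L < y3"
      using y1 y2 y3 P0 P1 P2 by (auto simp: less_le)
    show "y^3 - (L + M + 3) * y^2 + (L * M + L + M + 3) * y - 1 = 0" if "y \<in> {y1, y2, y3}" for y
      using that y1 y2 y3 unfolding P_def by auto
  qed
qed

lemma dss_sextic_factorization: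
  fixes l m :: nat
  assumes "1 \<le> l" and "1 \<le> m"
  obtains x1 x2 x3 :: real where "0 < x1" "0 < x2" "0 < x3"
    and "x1 * x2 * x3 = 1" and "x1^2 + x2^2 + x3^2 = real (l + m + 3)"
    and "\<And>x. dss_sextic l m x = (x^2 - x1^2) * (x^2 - x2^2) * (x^2 - x3^2)"
proof -
  obtain y1 y2 y3 where y: "0 < y1" "y1 < 1" "1 < y2" "y2 < 1 + real l" "1 + real l < y3"
    and roots: "\<And>y. y \<in> {y1, y2, y3} \<Longrightarrow>
      y^3 - (real l + real m + 3) * y^2 + (real l * real m + real l + real m + 3) * y - 1 = 0"
    using dss_cubic_roots[of "real l" "real m"] assms by auto
  have "y1 \<noteq> y2" "y1 \<noteq> y3" "y2 \<noteq> y3" using y by auto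
  note vieta = cubic_vieta[OF roots this]
  show ?thesis
  proof (rule that[of "sqrt y1" "sqrt y2" "sqrt y3"])
    show "0 < sqrt y1" "0 < sqrt y2" "0 < sqrt y3" using y by auto
    show "sqrt y1 * sqrt y2 * sqrt y3 = 1" using vieta(2) by (simp add: real_sqrt_mult[symmetric])
    show "(sqrt y1)^2 + (sqrt y2)^2 + (sqrt y3)^2 = real (l + m + 3)" using vieta(1) y by simp
    show "dss_sextic l m x = (x^2 - (sqrt y1)^2) * (x^2 - (sqrt y2)^2) * (x^2 - (sqrt y3)^2)" for x
      using vieta(3)[of "x^2"] y by (simp add: dss_sextic_def power_mult[symmetric])
  qed
qed

lemma dss_edge_less: "dss_edge l m u w \<Longrightarrow> w < dss_num_vertices l m"
  by (auto simp: dss_edge_def dss_arc_def dss_num_vertices_def)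

lemma dss_adj_mult_vec_nth:
  assumes "v \<in> carrier_vec (dss_num_vertices l m)" and "u < dss_num_vertices l m"
  shows "(dss_adj l m *\<^sub>v v) $ u = (\<Sum>w | dss_edge l m u w. v $ w)"
proof -
  let ?n = "dss_num_vertices l m"
  have "(dss_adj l m *\<^sub>v v) $ u = (\<Sum>w<?n. if dss_edge l m u w then v $ w else 0)"
    using assms unfolding dss_adj_def
    by (auto simp: mult_mat_vec_def scalar_prod_def lessThan_atLeast0 intro!: sum.cong)
  also have "\<dots> = (\<Sum>w | w < ?n \<and> dss_edge l m u w. v $ w)"
    by (simp add: sum.If_cases Collect_conj_eq lessThan_def Int_commute)
  also have "{w. w < ?n \<and> dss_edge l m u w} = {w. dss_edge l m u w}"
    using dss_edge_less by blast
  finally show ?thesis .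
qed

lemma dss_neighbours_centre_left:
  "{w. dss_edge l m 0 w} = insert 1 ((\<lambda>i. 2 + 2 * i) ` {..<l})"
  unfolding dss_edge_def dss_arc_def by (auto; presburger)

lemma dss_neighbours_centre_right:
  "{w. dss_edge l m 1 w} = insert 0 ((\<lambda>j. 2 + 2 * l + 2 * j) ` {..<m})"
  unfolding dss_edge_def dss_arc_def by (auto; presburger)

lemma dss_neighbours_left_inner:
  "i < l \<Longrightarrow> {w. dss_edge l m (2 + 2 * i) w} = {0, 3 + 2 * i}"
  unfolding dss_edge_def dss_arc_def by (auto; presburger)

lemma dss_neighbours_left_leaf:
  "i < l \<Longrightarrow> {w. dss_edge l m (3 + 2 * i) w} = {2 + 2 * i}"
  unfolding dss_edge_def dss_arc_def by (auto; presburger)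

lemma dss_neighbours_right_inner:
  "j < m \<Longrightarrow> {w. dss_edge l m (2 + 2 * l + 2 * j) w} = {1, 3 + 2 * l + 2 * j}"
  unfolding dss_edge_def dss_arc_def by (auto; presburger)

lemma dss_neighbours_right_leaf:
  "j < m \<Longrightarrow> {w. dss_edge l m (3 + 2 * l + 2 * j) w} = {2 + 2 * l + 2 * j}"
  unfolding dss_edge_def dss_arc_def by (auto; presburger)

lemma dss_vertex_cases:
  assumes "u < dss_num_vertices l m"
  obtains "u = 0" | "u = 1"
    | i where "i < l" "u = 2 + 2 * i" | i where "i < l" "u = 3 + 2 * i"
    | j where "j < m" "u = 2 + 2 * l + 2 * j" | j where "j < m" "u = 3 + 2 * l + 2 * j"
proof -
  have "u \<le> 1 \<or> (\<exists>r. u = 2 + 2 * r \<or> u = 3 + 2 * r)" by presburger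
  then consider "u \<le> 1" | r where "u = 2 + 2 * r \<or> u = 3 + 2 * r" by blast
  then show ?thesis
  proof cases
    case 1
    then show ?thesis using that(1,2) by linarith
  next
    case (2 r)
    show ?thesis
    proof (cases "r < l")
      case True
      then show ?thesis using 2 that(3,4) by blast
    next
      case False
      then have "r - l < m" "r = l + (r - l)"
        using 2 assms by (auto simp: dss_num_vertices_def)
      then show ?thesis using 2 that(5,6) by (metis add.assoc distrib_left)
    qed
  qed
qed

locale dss_eigenfunction =
  fixes l m :: nat and k :: real and f :: "nat \<Rightarrow> real"
  assumes neighbour_sum:
    "\<And>u. u < dss_num_vertices l m \<Longrightarrow> (\<Sum>w | dss_edge l m u w. f w) = k * f u"
begin

lemma left_arm:
  assumes "i < l"
  shows "(k^2 - 1) * f (3 + 2 * i) = f 0" and "(k^2 - 1) * f (2 + 2 * i) = k * f 0"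
proof -
  have "3 + 2 * i < dss_num_vertices l m" "2 + 2 * i < dss_num_vertices l m"
    using assms by (simp_all add: dss_num_vertices_def)
  from this[THEN neighbour_sum] have "f (2 + 2 * i) = k * f (3 + 2 * i)"
    and "f 0 + f (3 + 2 * i) = k * f (2 + 2 * i)"
    unfolding dss_neighbours_left_leaf[OF assms] dss_neighbours_left_inner[OF assms] by simp_all
  then show leaf: "(k^2 - 1) * f (3 + 2 * i) = f 0"
    by (simp add: algebra_simps power2_eq_square)
  from \<open>f (2 + 2 * i) = k * f (3 + 2 * i)\<close>
  have "(k^2 - 1) * f (2 + 2 * i) = k * ((k^2 - 1) * f (3 + 2 * i))" by simp
  with leaf show "(k^2 - 1) * f (2 + 2 * i) = k * f 0" by simp

qed

lemma right_arm:
  assumes "j < m"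
  shows "(k^2 - 1) * f (3 + 2 * l + 2 * j) = f 1" and "(k^2 - 1) * f (2 + 2 * l + 2 * j) = k * f 1"
proof -
  have "3 + 2 * l + 2 * j < dss_num_vertices l m" "2 + 2 * l + 2 * j < dss_num_vertices l m"
    using assms by (simp_all add: dss_num_vertices_def)
  from this[THEN neighbour_sum] have "f (2 + 2 * l + 2 * j) = k * f (3 + 2 * l + 2 * j)"
    and "f 1 + f (3 + 2 * l + 2 * j) = k * f (2 + 2 * l + 2 * j)"
    unfolding dss_neighbours_right_leaf[OF assms] dss_neighbours_right_inner[OF assms] by simp_all
  then show leaf: "(k^2 - 1) * f (3 + 2 * l + 2 * j) = f 1"
    by (simp add: algebra_simps power2_eq_square)
  from \<open>f (2 + 2 * l + 2 * j) = k * f (3 + 2 * l + 2 * j)\<close>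
  have "(k^2 - 1) * f (2 + 2 * l + 2 * j) = k * ((k^2 - 1) * f (3 + 2 * l + 2 * j))" by simp
  with leaf show "(k^2 - 1) * f (2 + 2 * l + 2 * j) = k * f 1" by simp

qed

lemma centre_left: "(k^2 - 1) * f 1 = k * f 0 * (k^2 - 1 - real l)"
proof -
  have "1 \<notin> (\<lambda>i. 2 + 2 * i) ` {..<l}" by auto
  then have "(\<Sum>w | dss_edge l m 0 w. f w) = f 1 + (\<Sum>i<l. f (2 + 2 * i))"
    unfolding dss_neighbours_centre_left by (simp add: sum.reindex inj_on_def del: add_2_eq_Suc)
  then have "f 1 + (\<Sum>i<l. f (2 + 2 * i)) = k * f 0"
    using neighbour_sum[of 0] by (simp add: dss_num_vertices_def)
  then have "(k^2 - 1) * f 1 + (\<Sum>i<l. (k^2 - 1) * f (2 + 2 * i)) = (k^2 - 1) * k * f 0"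
    by (metis distrib_left mult.assoc sum_distrib_left)
  then show ?thesis using left_arm(2) by (simp add: algebra_simps)
qed

lemma centre_right: "(k^2 - 1) * f 0 = k * f 1 * (k^2 - 1 - real m)"
proof -
  have "0 \<notin> (\<lambda>j. 2 + 2 * l + 2 * j) ` {..<m}" by auto
  then have "(\<Sum>w | dss_edge l m 1 w. f w) = f 0 + (\<Sum>j<m. f (2 + 2 * l + 2 * j))"
    unfolding dss_neighbours_centre_right by (simp add: sum.reindex inj_on_def del: add_2_eq_Suc)
  then have "f 0 + (\<Sum>j<m. f (2 + 2 * l + 2 * j)) = k * f 1"
    using neighbour_sum[of 1] by (simp add: dss_num_vertices_def)
  then have "(k^2 - 1) * f 0 + (\<Sum>j<m. (k^2 - 1) * f (2 + 2 * l + 2 * j)) = (k^2 - 1) * k * f 1"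
    by (metis distrib_left mult.assoc sum_distrib_left)
  then show ?thesis using right_arm(2) by (simp add: algebra_simps)
qed

lemma vanishes_if_centres_vanish:
  assumes "k^2 \<noteq> 1" and "f 0 = 0" and "f 1 = 0" and "u < dss_num_vertices l m"
  shows "f u = 0"
  using assms(4)
proof (cases rule: dss_vertex_cases)
qed (use assms left_arm right_arm in auto)

lemma sextic_root:
  assumes "k^2 \<noteq> 1" and "\<exists>u < dss_num_vertices l m. f u \<noteq> 0"
  shows "dss_sextic l m k = 0"
proof -
  define t where "t = k^2 - 1"
  have "t \<noteq> 0" using assms(1) by (simp add: t_def)
  have centres: "t * f 1 = k * f 0 * (t - real l)" "t * f 0 = k * f 1 * (t - real m)"
    unfolding t_def by (fact centre_left centre_right)+
  have "f 0 \<noteq> 0 \<and> f 1 \<noteq> 0"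
    using centres \<open>t \<noteq> 0\<close> vanishes_if_centres_vanish assms by auto
  moreover have "f 0 * f 1 * t^2 = f 0 * f 1 * (k^2 * (t - real l) * (t - real m))"
    using arg_cong2[OF centres, of "(*)"] by (simp add: algebra_simps power2_eq_square)
  ultimately have "t^2 = k^2 * (t - real l) * (t - real m)" by simp
  then show ?thesis
    unfolding dss_sextic_def t_def
    by (simp add: algebra_simps power2_eq_square power3_eq_cube numeral_eq_Suc)
qed

end

lemma dss_eigenvalue_sextic:
  assumes "eigenvalue (dss_adj l m) k"
  shows "k^2 = 1 \<or> dss_sextic l m k = 0"
proof -
  let ?n = "dss_num_vertices l m"
  obtain v where v: "v \<in> carrier_vec ?n" "v \<noteq> 0\<^sub>v ?n" "dss_adj l m *\<^sub>v v = k \<cdot>\<^sub>v v"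
    using assms unfolding eigenvalue_def eigenvector_def dss_adj_def by auto
  interpret dss_eigenfunction l m k "\<lambda>w. v $ w"
    by unfold_locales (metis v(1,3) dss_adj_mult_vec_nth index_smult_vec(1) carrier_vecD)
  have "\<exists>u < ?n. v $ u \<noteq> 0" using v(1,2) by (auto intro!: eq_vecI)
  then show ?thesis using sextic_root by blast
qed

lemma dss_eigenvalue_abs_mem:
  fixes x1 x2 x3 :: real
  assumes pos: "0 < x1" "0 < x2" "0 < x3"
    and factorization: "\<And>x. dss_sextic l m x = (x^2 - x1^2) * (x^2 - x2^2) * (x^2 - x3^2)"
    and "eigenvalue (dss_adj l m) k"
  shows "\<bar>k\<bar> \<in> {1, x1, x2, x3}"
proof -
  have "\<exists>c \<in> {1, x1, x2, x3}. k^2 = c^2"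
    using dss_eigenvalue_sextic[OF assms(5)] factorization[of k] by auto
  then obtain c where c: "c \<in> {1, x1, x2, x3}" "k^2 = c^2" by blast
  moreover have "0 \<le> c" using c(1) pos by auto
  ultimately have "\<bar>k\<bar> = c" using power2_eq_iff_nonneg[of "\<bar>k\<bar>" c] by simp
  with c(1) show ?thesis by simp
qed

theorem corollary2p6:
  fixes l m :: nat
  assumes "irreducible ([:-1, 0, of_nat (l*m + l + m + 3), 0, - of_nat (l + m + 3), 0, 1:] :: rat poly)"
  shows "Q_lin_indep {k. eigenvalue (dss_adj l m) k \<and> k > 0}
       \<and> Q_lin_indep {k. eigenvalue (dss_adj l m) k \<and> k < 0}"
proof -
  define q :: "rat poly" where "q = [:-1, 0, of_nat (l*m + l + m + 3), 0, - of_nat (l + m + 3), 0, 1:]"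
  have irr: "irreducible q" and deg: "degree q = 6" using assms by (simp_all add: q_def)
  have q_eval: "poly (map_poly of_rat q) x = dss_sextic l m x" for x :: real
    by (simp add: q_def dss_sextic_def hom_distribs of_rat_add of_rat_mult algebra_simps
        numeral_eq_Suc)
  have "poly q 1 = of_nat (l * m)" by (simp add: q_def)
  then have "1 \<le> l" "1 \<le> m" using irreducible_poly_no_rational_root[OF irr, of 1] deg by auto
  then obtain x1 x2 x3 where pos: "0 < x1" "0 < x2" "0 < x3"
    and prod: "x1 * x2 * x3 = 1" and sq_sum: "x1^2 + x2^2 + x3^2 = real (l + m + 3)"
    and factorization: "\<And>x. dss_sextic l m x = (x^2 - x1^2) * (x^2 - x2^2) * (x^2 - x3^2)"
    using dss_sextic_factorization by blast
  have "Q_lin_indep {1, x1, x2, x3}"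
  proof (rule Q_lin_indep_one_and_roots[OF irr _ _ prod])
    show "x1^2 + x2^2 + x3^2 = of_rat (of_nat (l + m + 3))"
      unfolding of_rat_of_nat_eq by (fact sq_sum)
  qed (auto simp: deg q_eval factorization)
  moreover have "{k. eigenvalue (dss_adj l m) k \<and> k > 0} \<subseteq> {1, x1, x2, x3}"
    using dss_eigenvalue_abs_mem[OF pos factorization] by force
  moreover have "{k. eigenvalue (dss_adj l m) k \<and> k < 0} \<subseteq> uminus ` {1, x1, x2, x3}"
    using dss_eigenvalue_abs_mem[OF pos factorization] by (force simp: image_iff)
  ultimately show ?thesis by (meson Q_lin_indep_subset Q_lin_indep_uminus_image)
qed

end
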